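(* Let $L\ge2$, let $\ell$ be continuously differentiable, and let $W(t)$, $t\ge0$, be a gradient flow trajectory. Then for all $t\ge0$: (i) for every $1\le k\le L$, $\|W_k(t)\|_F^2-\|W_k(t)\|_2^2\le D$; (ii) for every $1\le k<L$ with $W_{k+1}(t)\ne0$, $$\langle v_{k+1}(t),u_k(t)\rangle^2\ \ge\ 1-\frac{D+\|W_{k+1}(0)\|_2^2+\|W_k(0)\|_2^2}{\|W_{k+1}(t)\|_2^2};$$ (iii) if $\max_{1\le k\le L}\|W_k(t)\|_F\to\infty$ as $t\to\infty$, then $\left|\left\langle \frac{w_{\mathrm{prod}}(t)}{\prod_{k=1}^L\|W_k(t)\|_F},v_1(t)\right\rangle\right|\to1$.
   Context: A depth-$L$ linear network is $W=(W_L,\dots,W_1)$ with $W_k\in\mathbb{R}^{d_k\times d_{k-1}}$, $d_0=d$, $d_L=1$, and $w_{\mathrm{prod}}:=(W_L\cdots W_1)^\top\in\mathbb{R}^d$. Given vectors $z_1,\dots,z_n\in\mathbb{R}^d$ (with $z_i=y_ix_i$, $\|x_i\|\le1$, $y_i\in\{\pm1\}$), the risk is $\mathcal{R}(W)=\frac1n\sum_{i=1}^n\ell(\langle w_{\mathrm{prod}},z_i\rangle)$. Gradient flow: a $C^1$ curve $W(t)$, $t\in[0,\infty)$, with $\frac{d}{dt}W(t)=-\nabla\mathcal{R}(W(t))$. $\|\cdot\|_F$ is the Frobenius norm and $\|\cdot\|_2$ the spectral norm. The constant $D$ depends only on the initialization: $$D:=\Big(\max_{1\le k\le L}\|W_k(0)\|_F^2\Big)-\|W_L(0)\|_F^2+\sum_{k=1}^{L-1}\big\|W_k(0)W_k(0)^\top-W_{k+1}(0)^\top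 W_{k+1}(0)\big\|_2.$$ For each $k$ and time $t$, $u_k(t),v_k(t)$ are a pair of first (top) left and right unit singular vectors of $W_k(t)$. *)

theory Defs
  imports "HOL-Analysis.Analysis"
begin

text \<open>Vectors in R^p are represented as functions nat => real (only indices < p matter);
  an m x p matrix is a function nat => nat => real (only entries i < m, j < p matter).
  A depth-L network is W :: nat => nat => nat => real, W k being the d k x d (k-1) matrix W_k,
  for 1 <= k <= L.\<close>

type_synonym vec = "nat \<Rightarrow> real"
type_synonym mat = "nat \<Rightarrow> nat \<Rightarrow> real"
type_synonym net = "nat \<Rightarrow> mat"

definition vinner :: "nat \<Rightarrow> vec \<Rightarrow> vec \<Rightarrow> real" where
  "vinner p u v = (\<Sum>j<p. u j * v j)"

definition vnorm :: "nat \<Rightarrow> vec \<Rightarrow> real" where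
  "vnorm p v = sqrt (\<Sum>j<p. (v j)\<^sup>2)"

definition mat_vec :: "nat \<Rightarrow> mat \<Rightarrow> vec \<Rightarrow> vec" where
  "mat_vec p A v = (\<lambda>i. \<Sum>j<p. A i j * v j)"

definition fro_norm :: "nat \<Rightarrow> nat \<Rightarrow> mat \<Rightarrow> real" where
  "fro_norm m p A = sqrt (\<Sum>i<m. \<Sum>j<p. (A i j)\<^sup>2)"

definition spec_norm :: "nat \<Rightarrow> nat \<Rightarrow> mat \<Rightarrow> real" where
  "spec_norm m p A = Sup {vnorm m (mat_vec p A v) | v. vnorm p v \<le> 1}"

definition top_sv_pair :: "nat \<Rightarrow> nat \<Rightarrow> mat \<Rightarrow> vec \<Rightarrow> vec \<Rightarrow> bool" where
  "top_sv_pair m p A u v \<longleftrightarrow>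
     vnorm m u = 1 \<and> vnorm p v = 1 \<and>
     (\<forall>i<m. (\<Sum>j<p. A i j * v j) = spec_norm m p A * u i) \<and>
     (\<forall>j<p. (\<Sum>i<m. A i j * u i) = spec_norm m p A * v j)"

definition mat_nonzero :: "nat \<Rightarrow> nat \<Rightarrow> mat \<Rightarrow> bool" where
  "mat_nonzero m p A \<longleftrightarrow> (\<exists>i<m. \<exists>j<p. A i j \<noteq> 0)"

text \<open>prodW d W k = W_k ... W_1, a d k x d 0 matrix (prodW d W 0 = identity).\<close>
fun prodW :: "(nat \<Rightarrow> nat) \<Rightarrow> net \<Rightarrow> nat \<Rightarrow> mat" where
  "prodW d W 0 = (\<lambda>i j. if i = j then 1 else 0)"
| "prodW d W (Suc k) = (\<lambda>i j. \<Sum>l<d k. W (Suc k) i l * prodW d W k l j)"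

text \<open>w_prod = (W_L ... W_1)^T in R^{d 0} (d L = 1).\<close>
definition wprod :: "(nat \<Rightarrow> nat) \<Rightarrow> nat \<Rightarrow> net \<Rightarrow> vec" where
  "wprod d L W = (\<lambda>j. prodW d W L 0 j)"

definition risk :: "(real \<Rightarrow> real) \<Rightarrow> nat \<Rightarrow> (nat \<Rightarrow> vec) \<Rightarrow> (nat \<Rightarrow> nat) \<Rightarrow> nat \<Rightarrow> net \<Rightarrow> real" where
  "risk loss n z d L W = (1 / real n) * (\<Sum>i<n. loss (vinner (d 0) (wprod d L W) (z i)))"

definition upd_entry :: "net \<Rightarrow> nat \<Rightarrow> nat \<Rightarrow> nat \<Rightarrow> real \<Rightarrow> net" where
  "upd_entry W k i j s = W(k := (W k)(i := (W k i)(j := s)))"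

text \<open>Gradient flow on [0,\<infinity>): a C^1 curve whose (one-sided at 0) derivative equals minus
  the gradient of the risk; the gradient is given by its components, the partial derivatives
  of the risk w.r.t. each parameter entry.\<close>
definition gradient_flow ::
  "(real \<Rightarrow> real) \<Rightarrow> nat \<Rightarrow> (nat \<Rightarrow> vec) \<Rightarrow> (nat \<Rightarrow> nat) \<Rightarrow> nat \<Rightarrow> (real \<Rightarrow> net) \<Rightarrow> bool" where
  "gradient_flow loss n z d L W \<longleftrightarrow>
    (\<exists>W' :: real \<Rightarrow> net.
      \<forall>k\<in>{1..L}. \<forall>i<d k. \<forall>j<d (k - 1).
        continuous_on {0..} (\<lambda>s. W' s k i j) \<and>
        (\<forall>t\<ge>0. ((\<lambda>s. W s k i j) has_real_derivative W' t k i j) (at t within {0..}) \<and>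
                ((\<lambda>s. risk loss n z d L (upd_entry (W t) k i j s))
                    has_real_derivative (- W' t k i j)) (at (W t k i j))))"

definition gram_diff :: "(nat \<Rightarrow> nat) \<Rightarrow> net \<Rightarrow> nat \<Rightarrow> mat" where
  "gram_diff d W k = (\<lambda>i i'. (\<Sum>j<d (k - 1). W k i j * W k i' j)
                           - (\<Sum>r<d (Suc k). W (Suc k) r i * W (Suc k) r i'))"

definition Dconst :: "(nat \<Rightarrow> nat) \<Rightarrow> nat \<Rightarrow> net \<Rightarrow> real" where
  "Dconst d L W0 =
     Max ((\<lambda>k. (fro_norm (d k) (d (k - 1)) (W0 k))\<^sup>2) ` {1..L})
     - (fro_norm (d L) (d (L - 1)) (W0 L))\<^sup>2
     + (\<Sum>k\<in>{1..L - 1}. spec_norm (d k) (d k) (gram_diff d W0 k))"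

end

theory Submission
  imports Defs "HOL-Real_Asymp.Real_Asymp"
begin

text \<open>Under gradient flow each layer moves by an outer product of the backward vector
  \<open>r\<^sub>k = (W\<^sub>L \<cdots> W\<^sub>k\<^sub>+\<^sub>1)\<^sup>T\<close> with data-weighted forward vectors, so the matrices
  \<open>W\<^sub>k W\<^sub>k\<^sup>T - W\<^sub>k\<^sub>+\<^sub>1\<^sup>T W\<^sub>k\<^sub>+\<^sub>1\<close> are conserved. Taking traces, every \<open>\<parallel>W\<^sub>k\<parallel>\<^sub>F\<^sup>2\<close> differs from
  \<open>\<parallel>W\<^sub>L\<parallel>\<^sub>F\<^sup>2\<close> by a constant fixed at initialisation. Since \<open>r\<^sub>k\<^sub>-\<^sub>1 = W\<^sub>k\<^sup>T r\<^sub>k\<close>, the conserved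
  differences give \<open>\<parallel>r\<^sub>k\<^sub>-\<^sub>1\<parallel>\<^sup>2 \<ge> (\<parallel>W\<^sub>L\<parallel>\<^sub>F\<^sup>2 - S\<^sub>k) \<parallel>r\<^sub>k\<parallel>\<^sup>2\<close>, where \<open>S\<^sub>k\<close> sums the spectral norms of
  the conserved differences from layer \<open>k\<close> on; hence \<open>\<parallel>W\<^sub>k\<parallel>\<^sub>2\<^sup>2 \<ge> \<parallel>W\<^sub>L\<parallel>\<^sub>F\<^sup>2 - S\<^sub>k\<close>, which is (i).
  For (ii), the Rayleigh quotients of \<open>W\<^sub>k W\<^sub>k\<^sup>T\<close> and \<open>W\<^sub>k\<^sub>+\<^sub>1\<^sup>T W\<^sub>k\<^sub>+\<^sub>1\<close> at \<open>u\<^sub>k\<close> and \<open>v\<^sub>k\<^sub>+\<^sub>1\<close> differ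
  by at most the spectral norm of the conserved difference, while (i) bounds the part of
  \<open>W\<^sub>k\<close> outside its top singular direction. For (iii), \<open>r\<^sub>0 = w\<^sub>p\<^sub>r\<^sub>o\<^sub>d\<close> has squared norm between
  \<open>\<Prod>\<^sub>k (\<parallel>W\<^sub>L\<parallel>\<^sub>F\<^sup>2 - S\<^sub>k)\<close> and \<open>\<Prod>\<^sub>k \<parallel>W\<^sub>k\<parallel>\<^sub>F\<^sup>2\<close>, and all of it but \<open>D \<parallel>r\<^sub>1\<parallel>\<^sup>2\<close> lies along \<open>v\<^sub>1\<close>.\<close>

section \<open>Norms of vectors and matrices in coordinates\<close>

definition sqnorm :: "nat \<Rightarrow> vec \<Rightarrow> real" where
  "sqnorm p v = (\<Sum>j<p. (v j)\<^sup>2)"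

definition mat_tvec :: "nat \<Rightarrow> mat \<Rightarrow> vec \<Rightarrow> vec" where
  "mat_tvec m A y = (\<lambda>j. \<Sum>i<m. A i j * y i)"

definition fro_sqnorm :: "nat \<Rightarrow> nat \<Rightarrow> mat \<Rightarrow> real" where
  "fro_sqnorm m p A = (\<Sum>i<m. \<Sum>j<p. (A i j)\<^sup>2)"

definition quad_form :: "nat \<Rightarrow> mat \<Rightarrow> vec \<Rightarrow> real" where
  "quad_form m C x = (\<Sum>i<m. \<Sum>i'<m. x i * C i i' * x i')"

lemma sqnorm_nonneg: "0 \<le> sqnorm p v"
  unfolding sqnorm_def by (simp add: sum_nonneg)

lemma fro_sqnorm_nonneg: "0 \<le> fro_sqnorm m p A"
  unfolding fro_sqnorm_def by (simp add: sum_nonneg)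

lemma vnorm_eq_sqrt_sqnorm: "vnorm p v = sqrt (sqnorm p v)"
  unfolding vnorm_def sqnorm_def ..

lemma vnorm_power2: "(vnorm p v)\<^sup>2 = sqnorm p v"
  unfolding vnorm_eq_sqrt_sqnorm using sqnorm_nonneg[of p v] by simp

lemma vnorm_nonneg: "0 \<le> vnorm p v"
  unfolding vnorm_eq_sqrt_sqnorm using sqnorm_nonneg[of p v] by simp

lemma vnorm_zero: "vnorm p (\<lambda>_. 0) = 0"
  unfolding vnorm_def by simp

lemma fro_norm_power2: "(fro_norm m p A)\<^sup>2 = fro_sqnorm m p A"
  unfolding fro_norm_def fro_sqnorm_def[symmetric] using fro_sqnorm_nonneg by simp

lemma fro_norm_nonneg: "0 \<le> fro_norm m p A"
  unfolding fro_norm_def by (simp add: sum_nonneg)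

lemma sqnorm_eq_vinner: "sqnorm p v = vinner p v v"
  unfolding sqnorm_def vinner_def by (simp add: power2_eq_square)

lemma sqnorm_cong: "(\<And>i. i < m \<Longrightarrow> f i = g i) \<Longrightarrow> sqnorm m f = sqnorm m g"
  unfolding sqnorm_def by simp

lemma sqnorm_scale: "sqnorm p (\<lambda>j. c * v j) = c\<^sup>2 * sqnorm p v"
  unfolding sqnorm_def by (simp add: power_mult_distrib sum_distrib_left)

lemma sqnorm_eq_1_if_unit: "vnorm m u = 1 \<Longrightarrow> sqnorm m u = 1"
  using vnorm_power2[of m u] by simp

lemma sqnorm_le_1: "vnorm p v \<le> 1 \<Longrightarrow> sqnorm p v \<le> 1"
  using power_mono[of "vnorm p v" 1 2] vnorm_nonneg[of p v] by (simp add: vnorm_power2)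

lemma vinner_power2_le: "(vinner p u v)\<^sup>2 \<le> sqnorm p u * sqnorm p v"
  unfolding vinner_def sqnorm_def by (rule Cauchy_Schwarz_ineq_sum)

lemma abs_vinner_le: "\<bar>vinner p u v\<bar> \<le> vnorm p u * vnorm p v"
proof -
  have "\<bar>vinner p u v\<bar> = sqrt ((vinner p u v)\<^sup>2)" by simp
  also have "\<dots> \<le> sqrt (sqnorm p u * sqnorm p v)"
    using vinner_power2_le real_sqrt_le_mono by blast
  finally show ?thesis by (simp add: vnorm_eq_sqrt_sqnorm real_sqrt_mult)
qed

lemma vnorm_diff_le: "vnorm m (\<lambda>i. f i - g i) \<le> vnorm m f + vnorm m g"
proof -
  have "vnorm m (\<lambda>i. f i - g i) = L2_set (\<lambda>i. f i + (- g i)) {..<m}"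
    unfolding vnorm_def L2_set_def by simp
  also have "\<dots> \<le> L2_set f {..<m} + L2_set (\<lambda>i. - g i) {..<m}"
    by (rule L2_set_triangle_ineq)
  also have "\<dots> = vnorm m f + vnorm m g"
    unfolding vnorm_def L2_set_def by simp
  finally show ?thesis .
qed

lemma vinner_mat_tvec: "vinner p (mat_tvec m A y) w = vinner m y (mat_vec p A w)"
  unfolding vinner_def mat_tvec_def mat_vec_def
  by (simp add: sum_distrib_left sum_distrib_right sum.swap[of _ "{..<p}"] mult_ac)

lemma mat_vec_scale: "mat_vec p A (\<lambda>j. c * v j) = (\<lambda>i. c * mat_vec p A v i)"
  unfolding mat_vec_def by (simp add: sum_distrib_left mult_ac)

lemma sqnorm_mat_vec_le_fro: "sqnorm m (mat_vec p A v) \<le> fro_sqnorm m p A * sqnorm p v"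
proof -
  have "sqnorm m (mat_vec p A v) = (\<Sum>i<m. (\<Sum>j<p. A i j * v j)\<^sup>2)"
    unfolding sqnorm_def mat_vec_def ..
  also have "\<dots> \<le> (\<Sum>i<m. (\<Sum>j<p. (A i j)\<^sup>2) * sqnorm p v)"
    unfolding sqnorm_def by (rule sum_mono) (rule Cauchy_Schwarz_ineq_sum)
  also have "\<dots> = fro_sqnorm m p A * sqnorm p v"
    unfolding fro_sqnorm_def by (simp add: sum_distrib_right)
  finally show ?thesis .
qed

lemma sqnorm_mat_tvec_le_fro: "sqnorm p (mat_tvec m A y) \<le> fro_sqnorm m p A * sqnorm m y"
proof -
  have "sqnorm p (mat_tvec m A y) = (\<Sum>j<p. (\<Sum>i<m. A i j * y i)\<^sup>2)"
    unfolding sqnorm_def mat_tvec_def ..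
  also have "\<dots> \<le> (\<Sum>j<p. (\<Sum>i<m. (A i j)\<^sup>2) * sqnorm m y)"
    unfolding sqnorm_def by (rule sum_mono) (rule Cauchy_Schwarz_ineq_sum)
  also have "\<dots> = fro_sqnorm m p A * sqnorm m y"
    unfolding fro_sqnorm_def by (simp add: sum_distrib_right sum.swap[of _ "{..<p}"])
  finally show ?thesis .
qed

lemma vnorm_mat_vec_le_fro_norm:
  assumes "vnorm p v \<le> 1"
  shows "vnorm m (mat_vec p A v) \<le> fro_norm m p A"
proof -
  have "fro_sqnorm m p A * sqnorm p v \<le> fro_sqnorm m p A"
    using sqnorm_le_1[OF assms] fro_sqnorm_nonneg sqnorm_nonneg by (simp add: mult_left_le)
  then have "sqnorm m (mat_vec p A v) \<le> fro_sqnorm m p A"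
    using sqnorm_mat_vec_le_fro[of m p A v] by linarith
  then show ?thesis
    unfolding vnorm_eq_sqrt_sqnorm fro_norm_def fro_sqnorm_def[symmetric] by simp
qed

lemma spec_norm_set_nonempty: "{vnorm m (mat_vec p A v) | v. vnorm p v \<le> 1} \<noteq> {}"
proof -
  have "vnorm m (mat_vec p A (\<lambda>_. 0)) \<in> {vnorm m (mat_vec p A v) | v. vnorm p v \<le> 1}"
    using vnorm_zero[of p] by auto
  then show ?thesis by blast
qed

lemma spec_norm_bdd_above: "bdd_above {vnorm m (mat_vec p A v) | v. vnorm p v \<le> 1}"
  by (rule bdd_aboveI[where M = "fro_norm m p A"]) (auto intro: vnorm_mat_vec_le_fro_norm)

lemma vnorm_mat_vec_le_spec_norm: "vnorm p v \<le> 1 \<Longrightarrow> vnorm m (mat_vec p A v) \<le> spec_norm m p A"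
  unfolding spec_norm_def by (rule cSup_upper[OF _ spec_norm_bdd_above]) auto

lemma spec_norm_nonneg: "0 \<le> spec_norm m p A"
  using vnorm_mat_vec_le_spec_norm[of p "\<lambda>_. 0" m A] by (simp add: vnorm_zero mat_vec_def)

lemma spec_norm_le_fro_norm: "spec_norm m p A \<le> fro_norm m p A"
  unfolding spec_norm_def
  by (rule cSup_least[OF spec_norm_set_nonempty]) (auto intro: vnorm_mat_vec_le_fro_norm)

lemma spec_norm_power2_le_fro: "(spec_norm m p A)\<^sup>2 \<le> fro_sqnorm m p A"
  using power_mono[OF spec_norm_le_fro_norm spec_norm_nonneg, of m p A 2]
  by (simp add: fro_norm_power2)

lemma sqnorm_mat_vec_le_spec: "sqnorm m (mat_vec p A v) \<le> (spec_norm m p A)\<^sup>2 * sqnorm p v"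
proof (cases "sqnorm p v = 0")
  case True
  then show ?thesis using sqnorm_mat_vec_le_fro[of m p A v] sqnorm_nonneg[of m] by simp
next
  case False
  then have pos: "sqnorm p v > 0" using sqnorm_nonneg[of p v] by simp
  define c where "c = 1 / sqrt (sqnorm p v)"
  have c2: "c\<^sup>2 * sqnorm p v = 1" using pos unfolding c_def by (simp add: power_divide)
  have "vnorm p (\<lambda>j. c * v j) \<le> 1"
    unfolding vnorm_eq_sqrt_sqnorm sqnorm_scale c2 by simp
  then have "vnorm m (mat_vec p A (\<lambda>j. c * v j)) \<le> spec_norm m p A"
    by (rule vnorm_mat_vec_le_spec_norm)
  then have "(vnorm m (mat_vec p A (\<lambda>j. c * v j)))\<^sup>2 \<le> (spec_norm m p A)\<^sup>2"
    by (rule power_mono[OF _ vnorm_nonneg])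
  then have "c\<^sup>2 * sqnorm m (mat_vec p A v) \<le> (spec_norm m p A)\<^sup>2"
    by (simp add: vnorm_power2 mat_vec_scale sqnorm_scale)
  then have "c\<^sup>2 * sqnorm p v * sqnorm m (mat_vec p A v) \<le> (spec_norm m p A)\<^sup>2 * sqnorm p v"
    using pos by (simp add: mult_right_mono mult_ac)
  then show ?thesis using c2 by simp
qed

lemma sqnorm_mat_tvec_power2_le:
  "(sqnorm p (mat_tvec m A y))\<^sup>2 \<le> sqnorm m y * sqnorm m (mat_vec p A (mat_tvec m A y))"
proof -
  have "sqnorm p (mat_tvec m A y) = vinner m y (mat_vec p A (mat_tvec m A y))"
    unfolding sqnorm_eq_vinner vinner_mat_tvec ..
  then show ?thesis using vinner_power2_le[of m y "mat_vec p A (mat_tvec m A y)"] by simp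
qed

lemma sqnorm_mat_tvec_le_spec: "sqnorm p (mat_tvec m A y) \<le> (spec_norm m p A)\<^sup>2 * sqnorm m y"
proof (cases "sqnorm p (mat_tvec m A y) = 0")
  case True
  then show ?thesis using sqnorm_nonneg by simp
next
  case False
  then have pos: "sqnorm p (mat_tvec m A y) > 0" using sqnorm_nonneg[of p] by (simp add: less_le)
  have "(sqnorm p (mat_tvec m A y))\<^sup>2
      \<le> sqnorm m y * ((spec_norm m p A)\<^sup>2 * sqnorm p (mat_tvec m A y))"
    using sqnorm_mat_tvec_power2_le[of p m A y] sqnorm_mat_vec_le_spec[of m p A "mat_tvec m A y"]
      sqnorm_nonneg[of m y]
    by (meson mult_left_mono order_trans)
  then have "sqnorm p (mat_tvec m A y) * sqnorm p (mat_tvec m A y)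
      \<le> (sqnorm m y * (spec_norm m p A)\<^sup>2) * sqnorm p (mat_tvec m A y)"
    by (simp add: power2_eq_square mult_ac)
  then show ?thesis using pos by (simp add: mult_ac)
qed

lemma sqnorm_mat_tvec_growth:
  assumes "a * sqnorm q y \<le> sqnorm m (mat_tvec q B y)"
  shows "a * sqnorm m (mat_tvec q B y) \<le> sqnorm q (mat_vec m B (mat_tvec q B y))"
proof (cases "sqnorm q y = 0")
  case True
  then have "sqnorm m (mat_tvec q B y) = 0"
    using sqnorm_mat_tvec_power2_le[of m q B y] by simp
  then show ?thesis using sqnorm_nonneg by simp
next
  case False
  then have y: "0 < sqnorm q y" using sqnorm_nonneg[of q y] by simp
  have "sqnorm q y * (a * sqnorm m (mat_tvec q B y))
      = sqnorm m (mat_tvec q B y) * (a * sqnorm q y)" by (simp add: mult_ac)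
  also have "\<dots> \<le> (sqnorm m (mat_tvec q B y))\<^sup>2"
    using assms sqnorm_nonneg by (simp add: power2_eq_square mult_left_mono)
  also have "\<dots> \<le> sqnorm q y * sqnorm q (mat_vec m B (mat_tvec q B y))"
    by (rule sqnorm_mat_tvec_power2_le)
  finally show ?thesis using y by simp
qed

lemma vnorm_mat_vec_le: "vnorm m (mat_vec p A v) \<le> spec_norm m p A * vnorm p v"
  using real_sqrt_le_mono[OF sqnorm_mat_vec_le_spec[of m p A v]]
  by (simp add: real_sqrt_mult vnorm_eq_sqrt_sqnorm spec_norm_nonneg)

lemma vnorm_mat_tvec_le: "vnorm p (mat_tvec m A y) \<le> spec_norm m p A * vnorm m y"
  using real_sqrt_le_mono[OF sqnorm_mat_tvec_le_spec[of p m A y]]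
  by (simp add: real_sqrt_mult vnorm_eq_sqrt_sqnorm spec_norm_nonneg)

lemma spec_norm_pos:
  assumes "mat_nonzero m p A"
  shows "0 < spec_norm m p A"
proof -
  obtain i j where i: "i < m" and j: "j < p" and Aij: "A i j \<noteq> 0"
    using assms unfolding mat_nonzero_def by auto
  define e where "e = (\<lambda>l. if l = j then 1 else (0::real))"
  have Ae: "mat_vec p A e = (\<lambda>i'. A i' j)"
    unfolding mat_vec_def e_def using j by (simp add: if_distrib[of "\<lambda>x. _ * x"] cong: if_cong)
  have "vnorm p e = 1"
    using j unfolding vnorm_def e_def by (simp add: if_distrib[of power2] cong: if_cong)
  then have "vnorm m (mat_vec p A e) \<le> spec_norm m p A"
    by (simp add: vnorm_mat_vec_le_spec_norm)
  moreover have "0 < sqnorm m (mat_vec p A e)"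
  proof -
    have "(A i j)\<^sup>2 \<le> sqnorm m (mat_vec p A e)"
      unfolding Ae sqnorm_def using i by (intro member_le_sum) auto
    then show ?thesis using Aij by (smt (verit) zero_less_power2)
  qed
  ultimately show ?thesis
    unfolding vnorm_eq_sqrt_sqnorm by (meson less_le_trans real_sqrt_gt_zero)
qed

lemma quad_form_eq_vinner: "quad_form m C x = vinner m x (mat_vec m C x)"
  unfolding quad_form_def vinner_def mat_vec_def by (simp add: sum_distrib_left mult_ac)

lemma quad_form_cong:
  "(\<And>i i'. i < m \<Longrightarrow> i' < m \<Longrightarrow> C i i' = C' i i') \<Longrightarrow> quad_form m C x = quad_form m C' x"
  unfolding quad_form_def by simp

lemma abs_quad_form_le: "\<bar>quad_form m C x\<bar> \<le> spec_norm m m C * sqnorm m x"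
proof -
  have "\<bar>quad_form m C x\<bar> \<le> vnorm m x * vnorm m (mat_vec m C x)"
    unfolding quad_form_eq_vinner by (rule abs_vinner_le)
  also have "\<dots> \<le> vnorm m x * (spec_norm m m C * vnorm m x)"
    using vnorm_mat_vec_le vnorm_nonneg by (rule mult_left_mono)
  also have "\<dots> = spec_norm m m C * sqnorm m x"
    by (simp add: vnorm_power2[symmetric] power2_eq_square mult_ac)
  finally show ?thesis .
qed

lemma sqnorm_mat_tvec_eq:
  "sqnorm p (mat_tvec m A x) = sqnorm q (mat_vec m B x)
     + quad_form m (\<lambda>i i'. (\<Sum>j<p. A i j * A i' j) - (\<Sum>r<q. B r i * B r i')) x"
proof -
  have "sqnorm p (mat_tvec m A x) = quad_form m (\<lambda>i i'. \<Sum>j<p. A i j * A i' j) x"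
    unfolding sqnorm_def mat_tvec_def quad_form_def power2_eq_square
    by (simp add: sum_distrib_left sum_distrib_right sum.swap[of _ "{..<p}"] mult_ac)
  moreover have "sqnorm q (mat_vec m B x) = quad_form m (\<lambda>i i'. \<Sum>r<q. B r i * B r i') x"
    unfolding sqnorm_def mat_vec_def quad_form_def power2_eq_square
    by (simp add: sum_distrib_left sum_distrib_right sum.swap[of _ "{..<q}"] mult_ac)
  ultimately show ?thesis
    unfolding quad_form_def by (simp add: algebra_simps sum_subtractf)
qed

lemma spec_norm_gram_diff_le:
  "spec_norm m m (\<lambda>i i'. (\<Sum>j<p. A i j * A i' j) - (\<Sum>r<q. B r i * B r i'))
     \<le> (spec_norm m p A)\<^sup>2 + (spec_norm q m B)\<^sup>2"
  (is "spec_norm m m ?C \<le> _")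
  unfolding spec_norm_def[of m m]
proof (rule cSup_least[OF spec_norm_set_nonempty])
  fix w assume "w \<in> {vnorm m (mat_vec m ?C v) |v. vnorm m v \<le> 1}"
  then obtain x where w: "w = vnorm m (mat_vec m ?C x)" and x: "vnorm m x \<le> 1" by auto
  have Cx: "mat_vec m ?C x = (\<lambda>i. mat_vec p A (mat_tvec m A x) i - mat_tvec q B (mat_vec m B x) i)"
    unfolding mat_vec_def mat_tvec_def
    by (simp add: right_diff_distrib sum_subtractf left_diff_distrib sum_distrib_left
        sum_distrib_right sum.swap[of _ "{..<m}"] mult_ac)
  have "w \<le> vnorm m (mat_vec p A (mat_tvec m A x)) + vnorm m (mat_tvec q B (mat_vec m B x))"
    unfolding w Cx by (rule vnorm_diff_le)
  also have "\<dots> \<le> spec_norm m p A * (spec_norm m p A * vnorm m x)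
                  + spec_norm q m B * (spec_norm q m B * vnorm m x)"
  proof (rule add_mono)
    show "vnorm m (mat_vec p A (mat_tvec m A x)) \<le> spec_norm m p A * (spec_norm m p A * vnorm m x)"
      using vnorm_mat_vec_le[of m p A "mat_tvec m A x"] vnorm_mat_tvec_le[of p m A x]
        spec_norm_nonneg[of m p A]
      by (meson mult_left_mono order_trans)
    show "vnorm m (mat_tvec q B (mat_vec m B x)) \<le> spec_norm q m B * (spec_norm q m B * vnorm m x)"
      using vnorm_mat_tvec_le[of m q B "mat_vec m B x"] vnorm_mat_vec_le[of q m B x]
        spec_norm_nonneg[of q m B]
      by (meson mult_left_mono order_trans)
  qed
  also have "\<dots> = ((spec_norm m p A)\<^sup>2 + (spec_norm q m B)\<^sup>2) * vnorm m x"
    by (simp add: power2_eq_square algebra_simps)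
  also have "\<dots> \<le> (spec_norm m p A)\<^sup>2 + (spec_norm q m B)\<^sup>2"
    using x vnorm_nonneg[of m x] by (simp add: mult_left_le)
  finally show "w \<le> (spec_norm m p A)\<^sup>2 + (spec_norm q m B)\<^sup>2" .
qed

lemma sqnorm_remove_component:
  assumes "sqnorm m u = 1"
  shows "sqnorm m (\<lambda>i. y i - vinner m y u * u i) = sqnorm m y - (vinner m y u)\<^sup>2"
proof -
  have "sqnorm m (\<lambda>i. y i - \<beta> * u i) = sqnorm m y - 2 * \<beta> * vinner m y u + \<beta>\<^sup>2 * sqnorm m u"
    for \<beta>
    unfolding sqnorm_def vinner_def
    by (simp add: power2_eq_square algebra_simps sum_subtractf sum.distrib sum_distrib_left)
  then show ?thesis using assms by (simp add: power2_eq_square)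
qed

section \<open>Top singular vectors\<close>

lemma top_sv_pair_sqnorm:
  assumes "top_sv_pair m p A u v"
  shows "sqnorm m u = 1" and "sqnorm p v = 1"
  using assms unfolding top_sv_pair_def by (auto intro: sqnorm_eq_1_if_unit)

lemma mat_vec_top_sv:
  "top_sv_pair m p A u v \<Longrightarrow> i < m \<Longrightarrow> mat_vec p A v i = spec_norm m p A * u i"
  unfolding top_sv_pair_def mat_vec_def by auto

lemma mat_tvec_top_sv:
  "top_sv_pair m p A u v \<Longrightarrow> j < p \<Longrightarrow> mat_tvec m A u j = spec_norm m p A * v j"
  unfolding top_sv_pair_def mat_tvec_def by auto

lemma top_sv_pair_deflation:
  assumes sv: "top_sv_pair m p A u v"
  defines "A' \<equiv> \<lambda>i j. A i j - spec_norm m p A * u i * v j"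
  shows "fro_sqnorm m p A' = fro_sqnorm m p A - (spec_norm m p A)\<^sup>2"
    and "i < m \<Longrightarrow> mat_vec p A' v i = 0"
proof -
  define \<sigma> where "\<sigma> = spec_norm m p A"
  have uu: "(\<Sum>i<m. u i * u i) = 1" and vv: "(\<Sum>j<p. v j * v j) = 1"
    using top_sv_pair_sqnorm[OF sv] unfolding sqnorm_def power2_eq_square by auto
  have Av: "(\<Sum>j<p. A i j * v j) = \<sigma> * u i" if "i < m" for i
    using mat_vec_top_sv[OF sv that] unfolding mat_vec_def \<sigma>_def .
  have "fro_sqnorm m p A' = fro_sqnorm m p A - 2 * \<sigma> * (\<Sum>i<m. u i * (\<Sum>j<p. A i j * v j))
          + \<sigma>\<^sup>2 * (\<Sum>i<m. u i * u i) * (\<Sum>j<p. v j * v j)"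
    unfolding fro_sqnorm_def A'_def \<sigma>_def
    by (simp add: power2_eq_square algebra_simps sum_subtractf sum.distrib sum_distrib_left
        sum_distrib_right)
  also have "(\<Sum>i<m. u i * (\<Sum>j<p. A i j * v j)) = \<sigma>"
    using Av uu by (simp add: sum_distrib_left[symmetric] mult_ac)
  finally show "fro_sqnorm m p A' = fro_sqnorm m p A - (spec_norm m p A)\<^sup>2"
    using uu vv unfolding \<sigma>_def by (simp add: power2_eq_square)
  assume i: "i < m"
  have "mat_vec p A' v i = (\<Sum>j<p. A i j * v j) - \<sigma> * u i * (\<Sum>j<p. v j * v j)"
    unfolding mat_vec_def A'_def \<sigma>_def by (simp add: algebra_simps sum_subtractf sum_distrib_left)
  then show "mat_vec p A' v i = 0" using Av[OF i] vv by simp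
qed

lemma sqnorm_mat_tvec_le_top_sv:
  assumes sv: "top_sv_pair m p A u v"
  shows "sqnorm p (mat_tvec m A y) \<le> (spec_norm m p A)\<^sup>2 * (vinner m y u)\<^sup>2
            + (fro_sqnorm m p A - (spec_norm m p A)\<^sup>2) * (sqnorm m y - (vinner m y u)\<^sup>2)"
proof -
  define \<sigma> where "\<sigma> = spec_norm m p A"
  define \<beta> where "\<beta> = vinner m y u"
  define y' where "y' = (\<lambda>i. y i - \<beta> * u i)"
  define A' where "A' = (\<lambda>i j. A i j - \<sigma> * u i * v j)"
  define w where "w = mat_tvec m A' y'"
  have uu: "(\<Sum>i<m. u i * u i) = 1" and vv: "(\<Sum>j<p. v j * v j) = 1"
    using top_sv_pair_sqnorm[OF sv] unfolding sqnorm_def power2_eq_square by auto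
  have Aty: "mat_tvec m A y j = \<beta> * \<sigma> * v j + w j" if j: "j < p" for j
  proof -
    have "w j = mat_tvec m A y j - \<beta> * mat_tvec m A u j - \<sigma> * v j * (\<Sum>i<m. y i * u i)
               + \<sigma> * \<beta> * v j * (\<Sum>i<m. u i * u i)"
      unfolding w_def mat_tvec_def A'_def y'_def
      by (simp add: algebra_simps sum_subtractf sum.distrib sum_distrib_left)
    then show ?thesis
      using mat_tvec_top_sv[OF sv j] uu unfolding \<sigma>_def \<beta>_def vinner_def by simp
  qed
  have vw: "(\<Sum>j<p. v j * w j) = 0"
  proof -
    have "(\<Sum>j<p. v j * w j) = vinner p w v"
      unfolding vinner_def by (simp add: mult_ac)
    also have "\<dots> = vinner m y' (mat_vec p A' v)"
      unfolding w_def vinner_mat_tvec ..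
    also have "\<dots> = 0"
      unfolding vinner_def using top_sv_pair_deflation(2)[OF sv] by (simp add: A'_def \<sigma>_def)
    finally show ?thesis .
  qed
  have "sqnorm p (mat_tvec m A y) = (\<Sum>j<p. (\<beta> * \<sigma> * v j + w j)\<^sup>2)"
    unfolding sqnorm_def using Aty by simp
  also have "\<dots> = \<beta>\<^sup>2 * \<sigma>\<^sup>2 * (\<Sum>j<p. v j * v j) + 2 * \<beta> * \<sigma> * (\<Sum>j<p. v j * w j) + sqnorm p w"
    unfolding sqnorm_def by (simp add: power2_eq_square algebra_simps sum.distrib sum_distrib_left)
  also have "\<dots> = \<beta>\<^sup>2 * \<sigma>\<^sup>2 + sqnorm p w" using vv vw by simp
  also have "sqnorm p w \<le> fro_sqnorm m p A' * sqnorm m y'"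
    unfolding w_def by (rule sqnorm_mat_tvec_le_fro)
  also have "fro_sqnorm m p A' = fro_sqnorm m p A - \<sigma>\<^sup>2"
    using top_sv_pair_deflation(1)[OF sv] unfolding A'_def \<sigma>_def .
  also have "sqnorm m y' = sqnorm m y - \<beta>\<^sup>2"
    unfolding y'_def \<beta>_def by (rule sqnorm_remove_component[OF top_sv_pair_sqnorm(1)[OF sv]])
  finally show ?thesis unfolding \<sigma>_def \<beta>_def by (simp add: mult_ac)
qed

lemma alignment_arith:
  fixes X S s E c D e :: real
  assumes X: "0 \<le> X" and S: "0 < S" and c: "0 \<le> c" "c \<le> D" "c \<le> e" and E: "E \<le> D"
    and low: "S - c \<le> s * X + E * (1 - X)" and up: "s \<le> S + c"
  shows "1 - (D + e) / S \<le> X"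
proof -
  define K where "K = D + e"
  have "S - K \<le> X * S"
  proof (cases "S \<le> K")
    case True
    then show ?thesis using X S by (smt (verit) mult_nonneg_nonneg)
  next
    case False
    define T where "T = S + c - E"
    have T: "0 < T" unfolding T_def using False E c unfolding K_def by linarith
    have "S - c - E \<le> X * (s - E)" using low by (simp add: algebra_simps)
    also have "\<dots> \<le> X * T" unfolding T_def using up X by (simp add: mult_left_mono)
    finally have XT: "S - c - E \<le> X * T" .
    have "S * (S - c - E) - (S - K) * T = (K - 2 * c) * (S - K) + K * (K - c - E)"
      unfolding T_def by (simp add: algebra_simps)
    moreover have "0 \<le> (K - 2 * c) * (S - K)" using False c unfolding K_def by simp
    moreover have "0 \<le> K * (K - c - E)" using c E unfolding K_def by simp
    moreover have "S * (S - c - E) \<le> S * (X * T)" using XT S by (simp add: mult_left_mono)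
    ultimately have "(S - K) * T \<le> (X * S) * T" by (simp add: mult_ac)
    then show ?thesis using T by simp
  qed
  then show ?thesis using S unfolding K_def by (simp add: field_simps)
qed

lemma top_sv_alignment:
  assumes svA: "top_sv_pair m p A u v" and svB: "top_sv_pair q m B u' v'"
    and C: "\<And>x. \<bar>quad_form m (\<lambda>i i'. (\<Sum>j<p. A i j * A i' j) - (\<Sum>r<q. B r i * B r i')) x\<bar>
                 \<le> c * sqnorm m x"
    and E: "fro_sqnorm m p A - (spec_norm m p A)\<^sup>2 \<le> D"
    and c: "0 \<le> c" "c \<le> D" "c \<le> e"
    and B_pos: "0 < spec_norm q m B"
  shows "1 - (D + e) / (spec_norm q m B)\<^sup>2 \<le> (vinner m v' u)\<^sup>2"
proof (rule alignment_arith[OF _ _ c E])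
  have Bv': "sqnorm q (mat_vec m B v') = (spec_norm q m B)\<^sup>2"
    using sqnorm_cong[of q "mat_vec m B v'"] mat_vec_top_sv[OF svB] sqnorm_scale
      top_sv_pair_sqnorm[OF svB] by simp
  have Atu: "sqnorm p (mat_tvec m A u) = (spec_norm m p A)\<^sup>2"
    using sqnorm_cong[of p "mat_tvec m A u"] mat_tvec_top_sv[OF svA] sqnorm_scale
      top_sv_pair_sqnorm[OF svA] by simp
  show "(spec_norm q m B)\<^sup>2 - c
      \<le> (spec_norm m p A)\<^sup>2 * (vinner m v' u)\<^sup>2
        + (fro_sqnorm m p A - (spec_norm m p A)\<^sup>2) * (1 - (vinner m v' u)\<^sup>2)"
    using sqnorm_mat_tvec_eq[of p m A v' q B] Bv' C[of v'] top_sv_pair_sqnorm(2)[OF svB]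
      sqnorm_mat_tvec_le_top_sv[OF svA, of v'] by (simp add: vinner_def mult.commute)
  show "(spec_norm m p A)\<^sup>2 \<le> (spec_norm q m B)\<^sup>2 + c"
    using sqnorm_mat_tvec_eq[of p m A u q B] Atu C[of u] top_sv_pair_sqnorm(1)[OF svA]
      sqnorm_mat_vec_le_spec[of q m B u] by simp
qed (use B_pos in simp_all)

section \<open>Products of layers and the gradient of the risk\<close>

fun prodW_from :: "(nat \<Rightarrow> nat) \<Rightarrow> net \<Rightarrow> nat \<Rightarrow> nat \<Rightarrow> mat" where
  "prodW_from d W k 0 = (\<lambda>i j. if i = j then 1 else 0)"
| "prodW_from d W k (Suc g) = (\<lambda>i j. \<Sum>l<d (Suc k). prodW_from d W (Suc k) g i l * W (Suc k) l j)"

lemma prodW_add: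
  "i < d (k + g) \<Longrightarrow> prodW d W (k + g) i j = (\<Sum>l<d k. prodW_from d W k g i l * prodW d W k l j)"
proof (induction g arbitrary: k i)
  case 0
  then show ?case by (simp add: if_distrib[of "\<lambda>x. x * _"] cong: if_cong)
next
  case (Suc g)
  have "prodW d W (k + Suc g) i j = prodW d W (Suc k + g) i j" by simp
  also have "\<dots> = (\<Sum>l<d (Suc k). prodW_from d W (Suc k) g i l * prodW d W (Suc k) l j)"
    using Suc.IH[where k = "Suc k" and i = i] Suc.prems by (simp del: prodW.simps)
  also have "\<dots> = (\<Sum>l'<d k. prodW_from d W k (Suc g) i l' * prodW d W k l' j)"
    by (simp add: sum_distrib_left sum_distrib_right sum.swap[of _ "{..<d k}"] mult_ac)
  finally show ?case .
qed

lemma prodW_from_cong: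
  "(\<And>m. k < m \<Longrightarrow> W' m = W m) \<Longrightarrow> prodW_from d W' k g = prodW_from d W k g"
  by (induction g arbitrary: k) simp_all

lemma prodW_cong: "(\<And>m. 1 \<le> m \<Longrightarrow> m \<le> k \<Longrightarrow> W' m = W m) \<Longrightarrow> prodW d W' k = prodW d W k"
  by (induction k) simp_all

lemma prodW_pred:
  "1 \<le> k \<Longrightarrow> prodW d W k i j = (\<Sum>l<d (k - 1). W k i l * prodW d W (k - 1) l j)"
  by (cases k) auto

text \<open>Row \<open>0\<close> of \<open>W\<^sub>L \<cdots> W\<^sub>k\<^sub>+\<^sub>1\<close>; as \<open>d L = 1\<close>, this is the backward vector \<open>(W\<^sub>L \<cdots> W\<^sub>k\<^sub>+\<^sub>1)\<^sup>T\<close>.\<close>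

definition backward_vec :: "(nat \<Rightarrow> nat) \<Rightarrow> nat \<Rightarrow> net \<Rightarrow> nat \<Rightarrow> vec" where
  "backward_vec d L W k = prodW_from d W k (L - k) 0"

definition forward_vec :: "(nat \<Rightarrow> nat) \<Rightarrow> net \<Rightarrow> nat \<Rightarrow> vec \<Rightarrow> vec" where
  "forward_vec d W k x = mat_vec (d 0) (prodW d W k) x"

lemma forward_vec_Suc:
  "mat_vec (d k) (W (Suc k)) (forward_vec d W k x) = forward_vec d W (Suc k) x"
  unfolding forward_vec_def mat_vec_def
  by (simp add: sum_distrib_left sum_distrib_right sum.swap[of _ "{..<d 0}"] mult_ac)

lemma backward_vec_pred:
  assumes "1 \<le> k" "k \<le> L"
  shows "backward_vec d L W (k - 1) = mat_tvec (d k) (W k) (backward_vec d L W k)"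
proof -
  have "L - (k - 1) = Suc (L - k)" and "Suc (k - 1) = k" using assms by auto
  then show ?thesis unfolding backward_vec_def mat_tvec_def by (auto simp: mult_ac)
qed

lemma backward_vec_last: "backward_vec d L W L = (\<lambda>l. if 0 = l then 1 else 0)"
  unfolding backward_vec_def by simp

lemma wprod_eq_backward_vec:
  assumes "0 < d L" and "j < d 0"
  shows "wprod d L W j = backward_vec d L W 0 j"
proof -
  have "wprod d L W j = (\<Sum>l<d 0. prodW_from d W 0 L 0 l * prodW d W 0 l j)"
    unfolding wprod_def using prodW_add[of 0 d 0 L W j] assms(1) by simp
  then show ?thesis
    using assms(2) unfolding backward_vec_def
    by (simp add: if_distrib[of "\<lambda>x. _ * x"] cong: if_cong)
qed

lemma upd_entry_same:
  "upd_entry W k i j s k l l' = W k l l' + (if l = i \<and> l' = j then s - W k i j else 0)"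
  unfolding upd_entry_def by auto

lemma wprod_upd_entry:
  assumes k: "1 \<le> k" "k \<le> L" and i: "i < d k" and j: "j < d (k - 1)" and dL: "0 < d L"
  shows "wprod d L (upd_entry W k i j s) j' =
           wprod d L W j' + (s - W k i j) * backward_vec d L W k i * prodW d W (k - 1) j j'"
proof -
  let ?W' = "upd_entry W k i j s"
  let ?\<delta> = "s - W k i j"
  have L: "L = k + (L - k)" using k by simp
  have above: "prodW_from d ?W' k (L - k) = prodW_from d W k (L - k)"
    by (rule prodW_from_cong) (simp add: upd_entry_def)
  have below: "prodW d ?W' (k - 1) = prodW d W (k - 1)"
    by (rule prodW_cong) (use k in \<open>auto simp: upd_entry_def\<close>)
  have layer: "prodW d ?W' k l j' = prodW d W k l j' + (if l = i then ?\<delta> * prodW d W (k - 1) j j' else 0)"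
    for l
  proof -
    have "prodW d ?W' k l j' = (\<Sum>l'<d (k - 1). ?W' k l l' * prodW d W (k - 1) l' j')"
      using prodW_pred[OF k(1), of d ?W'] below by simp
    also have "\<dots> = (\<Sum>l'<d (k - 1). W k l l' * prodW d W (k - 1) l' j')
        + (\<Sum>l'<d (k - 1). (if l = i \<and> l' = j then ?\<delta> else 0) * prodW d W (k - 1) l' j')"
      unfolding upd_entry_same by (simp add: distrib_right sum.distrib)
    also have "\<dots> = prodW d W k l j' + (if l = i then ?\<delta> * prodW d W (k - 1) j j' else 0)"
      using j prodW_pred[OF k(1), of d W l j']
      by (simp add: if_distrib[of "\<lambda>x. x * _"] cong: if_cong)
    finally show ?thesis .
  qed
  have "wprod d L ?W' j' = (\<Sum>l<d k. prodW_from d W k (L - k) 0 l * prodW d ?W' k l j')"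
    unfolding wprod_def using prodW_add[of 0 d k "L - k" ?W' j'] dL L above by simp
  also have "\<dots> = (\<Sum>l<d k. prodW_from d W k (L - k) 0 l * prodW d W k l j')
      + (\<Sum>l<d k. prodW_from d W k (L - k) 0 l * (if l = i then ?\<delta> * prodW d W (k - 1) j j' else 0))"
    unfolding layer by (simp add: distrib_left sum.distrib)
  also have "(\<Sum>l<d k. prodW_from d W k (L - k) 0 l * prodW d W k l j') = wprod d L W j'"
    unfolding wprod_def using prodW_add[of 0 d k "L - k" W j'] dL L by simp
  finally show ?thesis
    using i unfolding backward_vec_def by (simp add: if_distrib[of "\<lambda>x. _ * x"] cong: if_cong)
qed

lemma vinner_wprod_upd_entry:
  assumes "1 \<le> k" "k \<le> L" "i < d k" "j < d (k - 1)" "0 < d L"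
  shows "vinner (d 0) (wprod d L (upd_entry W k i j s)) x =
           vinner (d 0) (wprod d L W) x
           + (s - W k i j) * (backward_vec d L W k i * forward_vec d W (k - 1) x j)"
  unfolding vinner_def wprod_upd_entry[OF assms] forward_vec_def mat_vec_def
  by (simp add: algebra_simps sum.distrib sum_subtractf sum_distrib_left)

definition risk_grad ::
  "(real \<Rightarrow> real) \<Rightarrow> nat \<Rightarrow> (nat \<Rightarrow> vec) \<Rightarrow> (nat \<Rightarrow> nat) \<Rightarrow> nat \<Rightarrow> net \<Rightarrow> nat \<Rightarrow> nat \<Rightarrow> nat \<Rightarrow> real"
  where "risk_grad dloss n z d L W k i j =
    (1 / real n) * (\<Sum>m<n. dloss (vinner (d 0) (wprod d L W) (z m))
                           * (backward_vec d L W k i * forward_vec d W (k - 1) (z m) j))"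

lemma risk_upd_entry_has_derivative:
  assumes "1 \<le> k" "k \<le> L" "i < d k" "j < d (k - 1)" "0 < d L"
    and loss: "\<And>s. (loss has_real_derivative dloss s) (at s)"
  shows "((\<lambda>s. risk loss n z d L (upd_entry W k i j s)) has_real_derivative
           risk_grad dloss n z d L W k i j) (at (W k i j))"
proof -
  define P where "P m = vinner (d 0) (wprod d L W) (z m)" for m
  define c where "c m = backward_vec d L W k i * forward_vec d W (k - 1) (z m) j" for m
  have "((\<lambda>s. loss (P m + (s - W k i j) * c m)) has_real_derivative dloss (P m) * c m) (at (W k i j))"
    for m
  proof -
    have inner: "((\<lambda>s. P m + (s - W k i j) * c m) has_real_derivative c m) (at (W k i j))"
      by (auto intro!: derivative_eq_intros)
    have "(loss has_real_derivative dloss (P m)) (at (P m + (W k i j - W k i j) * c m))"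
      using loss by simp
    from DERIV_chain2[OF this inner] show ?thesis .
  qed
  then have "((\<lambda>s. (1 / real n) * (\<Sum>m<n. loss (P m + (s - W k i j) * c m))) has_real_derivative
          (1 / real n) * (\<Sum>m<n. dloss (P m) * c m)) (at (W k i j))"
    by (intro DERIV_cmult DERIV_sum)
  then show ?thesis
    unfolding risk_def vinner_wprod_upd_entry[OF assms(1-5)] risk_grad_def P_def c_def .
qed

lemma gradient_flow_has_derivative:
  assumes flow: "gradient_flow loss n z d L W" and dL: "0 < d L"
    and loss: "\<And>s. (loss has_real_derivative dloss s) (at s)"
    and k: "1 \<le> k" "k \<le> L" and i: "i < d k" and j: "j < d (k - 1)" and t: "0 \<le> t"
  shows "((\<lambda>s. W s k i j) has_real_derivative - risk_grad dloss n z d L (W t) k i j)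
           (at t within {0..})"
proof -
  obtain W' where W: "((\<lambda>s. W s k i j) has_real_derivative W' t k i j) (at t within {0..})"
    and risk: "((\<lambda>s. risk loss n z d L (upd_entry (W t) k i j s)) has_real_derivative (- W' t k i j))
           (at (W t k i j))"
    using flow k i j t unfolding gradient_flow_def by fastforce
  have "- W' t k i j = risk_grad dloss n z d L (W t) k i j"
    using DERIV_unique[OF risk risk_upd_entry_has_derivative[OF k i j dL loss]] .
  then have "W' t k i j = - risk_grad dloss n z d L (W t) k i j" by simp
  with W show ?thesis by simp
qed

lemma risk_grad_balanced:
  assumes k: "1 \<le> k" "k < L"
  shows "(\<Sum>j<d (k - 1). risk_grad dloss n z d L W k a j * W k b j)
       = (\<Sum>r<d (Suc k). W (Suc k) r a * risk_grad dloss n z d L W (Suc k) r b)"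
proof -
  define c where "c m = dloss (vinner (d 0) (wprod d L W) (z m)) / real n" for m
  have "(\<Sum>j<d (k - 1). risk_grad dloss n z d L W k a j * W k b j)
      = (\<Sum>m<n. c m * backward_vec d L W k a
                 * mat_vec (d (k - 1)) (W (Suc (k - 1))) (forward_vec d W (k - 1) (z m)) b)"
    unfolding risk_grad_def c_def mat_vec_def using k
    by (simp add: sum_distrib_left sum_distrib_right sum.swap[of _ "{..<d (k - Suc 0)}"] mult_ac)
  also have "\<dots> = (\<Sum>m<n. c m * mat_tvec (d (Suc k)) (W (Suc k)) (backward_vec d L W (Suc k)) a
                 * forward_vec d W k (z m) b)"
    using k backward_vec_pred[of "Suc k" L d W] forward_vec_Suc[where k = "k - 1"] by simp
  also have "\<dots> = (\<Sum>r<d (Suc k). W (Suc k) r a * risk_grad dloss n z d L W (Suc k) r b)"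
    unfolding risk_grad_def c_def mat_tvec_def
    by (simp add: sum_distrib_left sum_distrib_right sum.swap[of _ "{..<d (Suc k)}"] mult_ac)
  finally show ?thesis .
qed

lemma gram_diff_conserved:
  assumes flow: "gradient_flow loss n z d L W" and dL: "0 < d L"
    and loss: "\<And>s. (loss has_real_derivative dloss s) (at s)"
    and k: "1 \<le> k" "k < L" and i: "i < d k" and i': "i' < d k" and t: "0 \<le> t"
  shows "gram_diff d (W t) k i i' = gram_diff d (W 0) k i i'"
proof -
  let ?G = "risk_grad dloss n z d L"
  have "((\<lambda>s. gram_diff d (W s) k i i') has_real_derivative 0) (at t within {0..})" if t: "0 \<le> t" for t
  proof -
    have "((\<lambda>s. gram_diff d (W s) k i i') has_real_derivative
        (\<Sum>j<d (k - 1). - ?G (W t) k i j * W t k i' j + - ?G (W t) k i' j * W t k i j)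
      - (\<Sum>r<d (Suc k). - ?G (W t) (Suc k) r i * W t (Suc k) r i'
                         + - ?G (W t) (Suc k) r i' * W t (Suc k) r i)) (at t within {0..})"
      unfolding gram_diff_def using t k i i'
      by (intro DERIV_diff DERIV_sum DERIV_mult gradient_flow_has_derivative[OF flow dL loss]) auto
    moreover have "(\<Sum>j<d (k - 1). - ?G (W t) k i j * W t k i' j + - ?G (W t) k i' j * W t k i j)
      - (\<Sum>r<d (Suc k). - ?G (W t) (Suc k) r i * W t (Suc k) r i'
                         + - ?G (W t) (Suc k) r i' * W t (Suc k) r i) = 0"
      using risk_grad_balanced[OF k, of dloss n z d "W t" i i'] risk_grad_balanced[OF k, of dloss n z d "W t" i' i]
      by (simp add: sum.distrib sum_negf sum_subtractf mult_ac)
    ultimately show ?thesis by simp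
  qed
  then obtain c where "\<forall>s\<in>{0..}. gram_diff d (W s) k i i' = c"
    using has_field_derivative_zero_constant[of "{0::real..}" "\<lambda>s. gram_diff d (W s) k i i'"] by auto
  then show ?thesis using t by simp
qed

lemma fro_sqnorm_diff_eq_trace:
  "fro_sqnorm (d k) (d (k - 1)) (W k) - fro_sqnorm (d (Suc k)) (d k) (W (Suc k))
     = (\<Sum>i<d k. gram_diff d W k i i)"
  unfolding fro_sqnorm_def gram_diff_def power2_eq_square
  by (simp add: sum_subtractf sum.swap[of _ "{..<d (Suc k)}"])

section \<open>Norm bounds along the gradient flow\<close>

locale linear_net_gradient_flow =
  fixes L n :: nat and d :: "nat \<Rightarrow> nat" and z :: "nat \<Rightarrow> vec"
    and loss dloss :: "real \<Rightarrow> real" and W :: "real \<Rightarrow> net"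
  assumes L_pos: "0 < L" and dL: "d L = 1"
    and loss_deriv: "\<And>s. (loss has_real_derivative dloss s) (at s)"
    and flow: "gradient_flow loss n z d L W"
begin

abbreviation D :: real where "D \<equiv> Dconst d L (W 0)"

abbreviation r :: "real \<Rightarrow> nat \<Rightarrow> vec" where "r t \<equiv> backward_vec d L (W t)"

text \<open>\<open>gap_tail k\<close> is the \<open>S\<^sub>k\<close> of the proof idea, and \<open>fro_last t + fro_offset k\<close> will turn
  out to be \<open>\<parallel>W\<^sub>k(t)\<parallel>\<^sub>F\<^sup>2\<close>.\<close>

definition gap :: "nat \<Rightarrow> real" where
  "gap k = spec_norm (d k) (d k) (gram_diff d (W 0) k)"

definition gap_tail :: "nat \<Rightarrow> real" where
  "gap_tail k = (\<Sum>i\<in>{k..L - 1}. gap i)"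

definition fro_last :: "real \<Rightarrow> real" where
  "fro_last t = fro_sqnorm (d L) (d (L - 1)) (W t L)"

definition fro_offset :: "nat \<Rightarrow> real" where
  "fro_offset k = fro_sqnorm (d k) (d (k - 1)) (W 0 k) - fro_sqnorm (d L) (d (L - 1)) (W 0 L)"

lemma gap_nonneg: "0 \<le> gap k"
  unfolding gap_def by (rule spec_norm_nonneg)

lemma gap_tail_nonneg: "0 \<le> gap_tail k"
  unfolding gap_tail_def by (simp add: sum_nonneg gap_nonneg)

lemma gap_tail_Suc: "1 \<le> k \<Longrightarrow> k < L \<Longrightarrow> gap_tail k = gap k + gap_tail (Suc k)"
  unfolding gap_tail_def by (subst sum.atLeast_Suc_atMost) auto

lemma gap_tail_last: "gap_tail L = 0"
  unfolding gap_tail_def using L_pos by simp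

lemma gap_tail_antimono: "i \<le> j \<Longrightarrow> gap_tail j \<le> gap_tail i"
  unfolding gap_tail_def by (rule sum_mono2) (auto simp: gap_nonneg)

lemma offset_plus_gap_tail_le_D: "1 \<le> k \<Longrightarrow> k \<le> L \<Longrightarrow> fro_offset k + gap_tail k \<le> D"
proof -
  assume k: "1 \<le> k" "k \<le> L"
  have "(fro_norm (d k) (d (k - 1)) (W 0 k))\<^sup>2
      \<le> Max ((\<lambda>k. (fro_norm (d k) (d (k - 1)) (W 0 k))\<^sup>2) ` {1..L})"
    using k by (intro Max_ge) auto
  moreover have "gap_tail k \<le> (\<Sum>k\<in>{1..L - 1}. gap k)"
    unfolding gap_tail_def using k by (intro sum_mono2) (auto simp: gap_nonneg)
  ultimately show ?thesis unfolding Dconst_def fro_offset_def fro_norm_power2 gap_def by simp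
qed

lemma gap_le_D: "1 \<le> k \<Longrightarrow> k < L \<Longrightarrow> gap k \<le> D"
proof -
  assume k: "1 \<le> k" "k < L"
  have "gap k \<le> (\<Sum>k\<in>{1..L - 1}. gap k)"
    using k by (intro member_le_sum) (auto simp: gap_nonneg)
  moreover have "(fro_norm (d L) (d (L - 1)) (W 0 L))\<^sup>2
      \<le> Max ((\<lambda>k. (fro_norm (d k) (d (k - 1)) (W 0 k))\<^sup>2) ` {1..L})"
    using k by (intro Max_ge) auto
  ultimately show ?thesis unfolding Dconst_def gap_def by simp
qed

lemma gram_diff_eq_init:
  "0 \<le> t \<Longrightarrow> 1 \<le> k \<Longrightarrow> k < L \<Longrightarrow> i < d k \<Longrightarrow> i' < d k \<Longrightarrow>
    gram_diff d (W t) k i i' = gram_diff d (W 0) k i i'"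
  by (rule gram_diff_conserved[OF flow _ loss_deriv]) (simp_all add: dL)

lemma abs_quad_form_gram_diff_le:
  assumes "0 \<le> t" "1 \<le> k" "k < L"
  shows "\<bar>quad_form (d k) (gram_diff d (W t) k) x\<bar> \<le> gap k * sqnorm (d k) x"
proof -
  have "quad_form (d k) (gram_diff d (W t) k) x = quad_form (d k) (gram_diff d (W 0) k) x"
    by (rule quad_form_cong) (simp add: gram_diff_eq_init[OF assms])
  then show ?thesis
    unfolding gap_def using abs_quad_form_le[of "d k" "gram_diff d (W 0) k" x] by simp
qed

lemma fro_sqnorm_eq_offset:
  "0 \<le> t \<Longrightarrow> 1 \<le> k \<Longrightarrow> k \<le> L \<Longrightarrow> fro_sqnorm (d k) (d (k - 1)) (W t k) = fro_last t + fro_offset k"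
proof (induction "L - k" arbitrary: k)
  case 0
  then show ?case unfolding fro_last_def fro_offset_def by simp
next
  case (Suc g)
  then have k: "1 \<le> k" "k < L" by auto
  have "fro_sqnorm (d k) (d (k - 1)) (W t k) - fro_sqnorm (d (Suc k)) (d k) (W t (Suc k))
      = fro_sqnorm (d k) (d (k - 1)) (W 0 k) - fro_sqnorm (d (Suc k)) (d k) (W 0 (Suc k))"
    unfolding fro_sqnorm_diff_eq_trace using gram_diff_eq_init[OF Suc.prems(1) k] by simp
  moreover have "fro_sqnorm (d (Suc k)) (d k) (W t (Suc k)) = fro_last t + fro_offset (Suc k)"
    using Suc.hyps(1)[of "Suc k"] Suc.hyps(2) Suc.prems k by simp
  ultimately show ?case unfolding fro_offset_def by simp
qed

lemma backward_sqnorm_last: "sqnorm (d L) (r t L) = 1"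
  unfolding backward_vec_last sqnorm_def dL by simp

lemma backward_sqnorm_step:
  "0 \<le> t \<Longrightarrow> 1 \<le> k \<Longrightarrow> k \<le> L \<Longrightarrow>
   (fro_last t - gap_tail k) * sqnorm (d k) (r t k) \<le> sqnorm (d (k - 1)) (r t (k - 1))"
proof (induction "L - k" arbitrary: k)
  case 0
  then have "k = L" by simp
  moreover have "sqnorm (d (L - 1)) (mat_tvec (d L) (W t L) (r t L)) = fro_last t"
    unfolding fro_last_def sqnorm_def fro_sqnorm_def mat_tvec_def backward_vec_last dL by simp
  ultimately show ?case
    using backward_vec_pred[of L L d "W t"] L_pos backward_sqnorm_last gap_tail_last by simp
next
  case (Suc g)
  note t = Suc.prems(1)
  have k: "1 \<le> k" "k < L" using Suc by auto
  have rk: "r t k = mat_tvec (d (Suc k)) (W t (Suc k)) (r t (Suc k))"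
    using backward_vec_pred[of "Suc k" L d "W t"] k by simp
  have "(fro_last t - gap_tail (Suc k)) * sqnorm (d (Suc k)) (r t (Suc k)) \<le> sqnorm (d k) (r t k)"
    using Suc.hyps(1)[of "Suc k"] Suc.hyps(2) t k by simp
  then have "(fro_last t - gap_tail (Suc k)) * sqnorm (d k) (r t k)
      \<le> sqnorm (d (Suc k)) (mat_vec (d k) (W t (Suc k)) (r t k))"
    unfolding rk by (rule sqnorm_mat_tvec_growth)
  moreover have "sqnorm (d (k - 1)) (r t (k - 1)) = sqnorm (d (Suc k)) (mat_vec (d k) (W t (Suc k)) (r t k))
      + quad_form (d k) (gram_diff d (W t) k) (r t k)"
    unfolding backward_vec_pred[OF k(1) less_imp_le[OF k(2)]] gram_diff_def
    by (rule sqnorm_mat_tvec_eq)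
  moreover have "- (gap k * sqnorm (d k) (r t k)) \<le> quad_form (d k) (gram_diff d (W t) k) (r t k)"
    using abs_quad_form_gram_diff_le[OF t k, of "r t k"] by linarith
  ultimately show ?case using gap_tail_Suc[OF k] by (simp add: algebra_simps)
qed

lemma backward_sqnorm_ge_prod:
  "0 \<le> t \<Longrightarrow> k \<le> L \<Longrightarrow> gap_tail (Suc k) \<le> fro_last t \<Longrightarrow>
   (\<Prod>i\<in>{Suc k..L}. fro_last t - gap_tail i) \<le> sqnorm (d k) (r t k)"
proof (induction "L - k" arbitrary: k)
  case 0
  then show ?case using backward_sqnorm_last by simp
next
  case (Suc g)
  have k: "k < L" using Suc by simp
  have "gap_tail (Suc (Suc k)) \<le> fro_last t"
    using Suc.prems(3) gap_tail_antimono[of "Suc k" "Suc (Suc k)"] by simp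
  then have IH: "(\<Prod>i\<in>{Suc (Suc k)..L}. fro_last t - gap_tail i) \<le> sqnorm (d (Suc k)) (r t (Suc k))"
    using Suc.hyps(1)[of "Suc k"] Suc.hyps(2) Suc.prems k by simp
  have "(\<Prod>i\<in>{Suc k..L}. fro_last t - gap_tail i)
      = (fro_last t - gap_tail (Suc k)) * (\<Prod>i\<in>{Suc (Suc k)..L}. fro_last t - gap_tail i)"
    using k by (subst prod.atLeast_Suc_atMost) auto
  also have "\<dots> \<le> (fro_last t - gap_tail (Suc k)) * sqnorm (d (Suc k)) (r t (Suc k))"
    using IH Suc.prems(3) by (simp add: mult_left_mono)
  also have "\<dots> \<le> sqnorm (d k) (r t k)"
    using backward_sqnorm_step[of t "Suc k"] Suc.prems k by simp
  finally show ?case .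
qed

lemma backward_sqnorm_le_prod:
  "0 \<le> t \<Longrightarrow> k \<le> L \<Longrightarrow> sqnorm (d k) (r t k) \<le> (\<Prod>i\<in>{Suc k..L}. fro_last t + fro_offset i)"
proof (induction "L - k" arbitrary: k)
  case 0
  then show ?case using backward_sqnorm_last by simp
next
  case (Suc g)
  have k: "k < L" using Suc by simp
  have IH: "sqnorm (d (Suc k)) (r t (Suc k)) \<le> (\<Prod>i\<in>{Suc (Suc k)..L}. fro_last t + fro_offset i)"
    using Suc.hyps(1)[of "Suc k"] Suc.hyps(2) Suc.prems k by simp
  have fro: "fro_sqnorm (d (Suc k)) (d k) (W t (Suc k)) = fro_last t + fro_offset (Suc k)"
    using fro_sqnorm_eq_offset[of t "Suc k"] Suc.prems k by simp
  have "sqnorm (d k) (r t k) = sqnorm (d k) (mat_tvec (d (Suc k)) (W t (Suc k)) (r t (Suc k)))"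
    using backward_vec_pred[of "Suc k" L d "W t"] k by simp
  also have "\<dots> \<le> (fro_last t + fro_offset (Suc k)) * sqnorm (d (Suc k)) (r t (Suc k))"
    using sqnorm_mat_tvec_le_fro[of "d k" "d (Suc k)" "W t (Suc k)" "r t (Suc k)"] unfolding fro .
  also have "\<dots> \<le> (fro_last t + fro_offset (Suc k)) * (\<Prod>i\<in>{Suc (Suc k)..L}. fro_last t + fro_offset i)"
    using mult_left_mono[OF IH] fro fro_sqnorm_nonneg[of "d (Suc k)" "d k" "W t (Suc k)"] by simp
  also have "\<dots> = (\<Prod>i\<in>{Suc k..L}. fro_last t + fro_offset i)"
    using k by (subst (2) prod.atLeast_Suc_atMost) auto
  finally show ?case .
qed

lemma spec_norm_power2_ge:
  assumes t: "0 \<le> t" and k: "1 \<le> k" "k \<le> L"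
  shows "fro_last t - gap_tail k \<le> (spec_norm (d k) (d (k - 1)) (W t k))\<^sup>2"
proof (cases "fro_last t \<le> gap_tail k")
  case True
  then show ?thesis using zero_le_power2[of "spec_norm (d k) (d (k - 1)) (W t k)"] by linarith
next
  case False
  have tail: "gap_tail (Suc k) \<le> fro_last t"
    using False gap_tail_antimono[of k "Suc k"] by simp
  have "0 < (\<Prod>i\<in>{Suc k..L}. fro_last t - gap_tail i)"
  proof (rule prod_pos)
    fix i assume "i \<in> {Suc k..L}"
    then have "gap_tail i \<le> gap_tail k" by (intro gap_tail_antimono) simp
    then show "0 < fro_last t - gap_tail i" using False by simp
  qed
  then have pos: "0 < sqnorm (d k) (r t k)"
    using backward_sqnorm_ge_prod[OF t k(2) tail] by linarith
  have "(fro_last t - gap_tail k) * sqnorm (d k) (r t k) \<le> sqnorm (d (k - 1)) (r t (k - 1))"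
    using backward_sqnorm_step[OF t k] .
  also have "\<dots> \<le> (spec_norm (d k) (d (k - 1)) (W t k))\<^sup>2 * sqnorm (d k) (r t k)"
    unfolding backward_vec_pred[OF k] by (rule sqnorm_mat_tvec_le_spec)
  finally show ?thesis using pos by simp
qed

lemma fro_minus_spec_le_D:
  "0 \<le> t \<Longrightarrow> 1 \<le> k \<Longrightarrow> k \<le> L \<Longrightarrow>
   (fro_norm (d k) (d (k - 1)) (W t k))\<^sup>2 - (spec_norm (d k) (d (k - 1)) (W t k))\<^sup>2 \<le> D"
  using fro_sqnorm_eq_offset[of t k] spec_norm_power2_ge[of t k] offset_plus_gap_tail_le_D[of k]
  unfolding fro_norm_power2 by linarith

lemma D_nonneg: "0 \<le> D"
  using fro_minus_spec_le_D[of 0 L] L_pos spec_norm_power2_le_fro[of "d L" "d (L - 1)" "W 0 L"]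
  unfolding fro_norm_power2 by simp

lemma singular_vectors_aligned:
  assumes t: "0 \<le> t" and k: "1 \<le> k" "k < L"
    and nz: "mat_nonzero (d (Suc k)) (d k) (W t (Suc k))"
    and svA: "top_sv_pair (d k) (d (k - 1)) (W t k) uk vk"
    and svB: "top_sv_pair (d (Suc k)) (d k) (W t (Suc k)) uk1 vk1"
  shows "1 - (D + (spec_norm (d (Suc k)) (d k) (W 0 (Suc k)))\<^sup>2 + (spec_norm (d k) (d (k - 1)) (W 0 k))\<^sup>2)
                / (spec_norm (d (Suc k)) (d k) (W t (Suc k)))\<^sup>2
         \<le> (vinner (d k) vk1 uk)\<^sup>2"
  unfolding add.assoc
proof (rule top_sv_alignment[OF svA svB])
  show "\<bar>quad_form (d k) (\<lambda>i i'. (\<Sum>j<d (k - 1). W t k i j * W t k i' j)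
          - (\<Sum>r<d (Suc k). W t (Suc k) r i * W t (Suc k) r i')) x\<bar> \<le> gap k * sqnorm (d k) x" for x
    using abs_quad_form_gram_diff_le[OF t k, of x] unfolding gram_diff_def .
  show "fro_sqnorm (d k) (d (k - 1)) (W t k) - (spec_norm (d k) (d (k - 1)) (W t k))\<^sup>2 \<le> D"
    using fro_minus_spec_le_D[OF t k(1)] k unfolding fro_norm_power2 by simp
  show "gap k \<le> (spec_norm (d (Suc k)) (d k) (W 0 (Suc k)))\<^sup>2 + (spec_norm (d k) (d (k - 1)) (W 0 k))\<^sup>2"
    using spec_norm_gram_diff_le[of "d k" "W 0 k" "d (k - 1)" "W 0 (Suc k)" "d (Suc k)"]
    unfolding gap_def gram_diff_def by (simp add: add.commute)
qed (use gap_nonneg gap_le_D k spec_norm_pos[OF nz] in auto)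

definition fro_prod :: "real \<Rightarrow> real" where
  "fro_prod t = (\<Prod>k\<in>{1..L}. fro_norm (d k) (d (k - 1)) (W t k))"

lemma fro_prod_power2:
  assumes "0 \<le> t"
  shows "(fro_prod t)\<^sup>2 = (\<Prod>k\<in>{1..L}. fro_last t + fro_offset k)"
  unfolding fro_prod_def prod_power_distrib fro_norm_power2
proof (rule prod.cong)
  fix k assume "k \<in> {1..L}"
  then show "fro_sqnorm (d k) (d (k - 1)) (W t k) = fro_last t + fro_offset k"
    using fro_sqnorm_eq_offset[OF assms, of k] by simp
qed simp

lemma fro_prod_nonneg: "0 \<le> fro_prod t"
  unfolding fro_prod_def by (simp add: prod_nonneg fro_norm_nonneg)

lemma abs_vinner_wprod_normalized:
  "\<bar>vinner (d 0) (\<lambda>j. wprod d L (W t) j / fro_prod t) v\<bar> = \<bar>vinner (d 0) (r t 0) v\<bar> / fro_prod t"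
proof -
  have "vinner (d 0) (\<lambda>j. wprod d L (W t) j / fro_prod t) v = vinner (d 0) (r t 0) v / fro_prod t"
    unfolding vinner_def sum_divide_distrib using wprod_eq_backward_vec[of d L] dL by simp
  then show ?thesis using fro_prod_nonneg[of t] by simp
qed

lemma wprod_alignment_le_1:
  assumes t: "0 \<le> t" and v: "vnorm (d 0) v = 1"
  shows "\<bar>vinner (d 0) (\<lambda>j. wprod d L (W t) j / fro_prod t) v\<bar> \<le> 1"
proof -
  have "\<bar>vinner (d 0) (r t 0) v\<bar> \<le> vnorm (d 0) (r t 0)"
    using abs_vinner_le[of "d 0" "r t 0" v] v by simp
  also have "\<dots> \<le> sqrt (\<Prod>k\<in>{1..L}. fro_last t + fro_offset k)"
    unfolding vnorm_eq_sqrt_sqnorm using backward_sqnorm_le_prod[OF t, of 0] by simp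
  also have "\<dots> = fro_prod t"
    unfolding fro_prod_power2[OF t, symmetric] using fro_prod_nonneg by simp
  finally show ?thesis
    unfolding abs_vinner_wprod_normalized by (cases "fro_prod t = 0") simp_all
qed

lemma backward_top_sv_power2_ge:
  assumes t: "0 \<le> t" and sv: "top_sv_pair (d 1) (d 0) (W t 1) u1 v1"
  shows "sqnorm (d 0) (r t 0) - D * sqnorm (d 1) (r t 1) \<le> (vinner (d 0) (r t 0) v1)\<^sup>2"
proof -
  define \<sigma> where "\<sigma> = spec_norm (d 1) (d 0) (W t 1)"
  define \<beta> where "\<beta> = vinner (d 1) (r t 1) u1"
  define E where "E = fro_sqnorm (d 1) (d 0) (W t 1) - \<sigma>\<^sup>2"
  have r0: "r t 0 = mat_tvec (d 1) (W t 1) (r t 1)"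
    using backward_vec_pred[of 1 L d "W t"] L_pos by simp
  have "vinner (d 0) (r t 0) v1 = vinner (d 1) (r t 1) (mat_vec (d 0) (W t 1) v1)"
    unfolding r0 vinner_mat_tvec ..
  also have "\<dots> = \<sigma> * \<beta>"
    unfolding vinner_def \<sigma>_def \<beta>_def using mat_vec_top_sv[OF sv]
    by (simp add: sum_distrib_left mult_ac)
  finally have x: "(vinner (d 0) (r t 0) v1)\<^sup>2 = \<sigma>\<^sup>2 * \<beta>\<^sup>2" by (simp add: power_mult_distrib)
  have "E \<le> D"
    using fro_minus_spec_le_D[OF t, of 1] L_pos unfolding E_def \<sigma>_def fro_norm_power2 by simp
  moreover have "0 \<le> E" unfolding E_def \<sigma>_def using spec_norm_power2_le_fro by simp
  moreover have "\<beta>\<^sup>2 \<le> sqnorm (d 1) (r t 1)"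
    using vinner_power2_le[of "d 1" "r t 1" u1] top_sv_pair_sqnorm(1)[OF sv] unfolding \<beta>_def by simp
  ultimately have "E * (sqnorm (d 1) (r t 1) - \<beta>\<^sup>2) \<le> D * sqnorm (d 1) (r t 1)"
    by (intro mult_mono) simp_all
  moreover have "sqnorm (d 0) (r t 0) \<le> \<sigma>\<^sup>2 * \<beta>\<^sup>2 + E * (sqnorm (d 1) (r t 1) - \<beta>\<^sup>2)"
    using sqnorm_mat_tvec_le_top_sv[OF sv, of "r t 1"] unfolding r0 \<sigma>_def \<beta>_def E_def .
  ultimately show ?thesis using x by linarith
qed

lemma wprod_alignment_power2_ge:
  assumes t: "0 \<le> t" and tail: "gap_tail 1 \<le> fro_last t"
    and pos: "\<And>k. k \<in> {1..L} \<Longrightarrow> 0 < fro_last t + fro_offset k"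
    and sv: "top_sv_pair (d 1) (d 0) (W t 1) u1 v1"
  shows "(\<Prod>k\<in>{1..L}. (fro_last t - gap_tail k) / (fro_last t + fro_offset k))
           - D / (fro_last t + fro_offset 1)
         \<le> (vinner (d 0) (\<lambda>j. wprod d L (W t) j / fro_prod t) v1)\<^sup>2"
proof -
  define Q where "Q = (\<Prod>k\<in>{1..L}. fro_last t + fro_offset k)"
  define Q2 where "Q2 = (\<Prod>k\<in>{2..L}. fro_last t + fro_offset k)"
  have Q: "0 < Q" unfolding Q_def using pos by (intro prod_pos) auto
  have Q2: "Q = (fro_last t + fro_offset 1) * Q2"
    unfolding Q_def Q2_def using L_pos by (subst prod.atLeast_Suc_atMost) (auto simp: numeral_2_eq_2)
  have "(\<Prod>k\<in>{1..L}. (fro_last t - gap_tail k) / (fro_last t + fro_offset k)) * Q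
      = (\<Prod>k\<in>{1..L}. fro_last t - gap_tail k)"
    unfolding prod_dividef Q_def[symmetric] using Q by simp
  moreover have "D / (fro_last t + fro_offset 1) * Q = D * Q2"
    using Q2 pos[of 1] L_pos by simp
  ultimately have "((\<Prod>k\<in>{1..L}. (fro_last t - gap_tail k) / (fro_last t + fro_offset k))
           - D / (fro_last t + fro_offset 1)) * Q
      = (\<Prod>k\<in>{1..L}. fro_last t - gap_tail k) - D * Q2"
    by (simp add: left_diff_distrib)
  also have "\<dots> \<le> sqnorm (d 0) (r t 0) - D * sqnorm (d 1) (r t 1)"
  proof -
    have "(\<Prod>k\<in>{1..L}. fro_last t - gap_tail k) \<le> sqnorm (d 0) (r t 0)"
      using backward_sqnorm_ge_prod[OF t, of 0] tail by simp
    moreover have "sqnorm (d 1) (r t 1) \<le> Q2"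
      using backward_sqnorm_le_prod[OF t, of 1] L_pos unfolding Q2_def by (simp add: numeral_2_eq_2)
    then have "D * sqnorm (d 1) (r t 1) \<le> D * Q2" using D_nonneg by (rule mult_left_mono)
    ultimately show ?thesis by linarith
  qed
  also have "\<dots> \<le> (vinner (d 0) (r t 0) v1)\<^sup>2"
    by (rule backward_top_sv_power2_ge[OF t sv])
  also have "\<dots> = (vinner (d 0) (\<lambda>j. wprod d L (W t) j / fro_prod t) v1)\<^sup>2 * Q"
  proof -
    have "(vinner (d 0) (\<lambda>j. wprod d L (W t) j / fro_prod t) v1)\<^sup>2 = (vinner (d 0) (r t 0) v1)\<^sup>2 / Q"
      using abs_vinner_wprod_normalized[of t v1] fro_prod_power2[OF t] unfolding Q_def
      by (metis power2_abs power_divide)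
    then show ?thesis using Q by simp
  qed
  finally show ?thesis using Q by simp
qed

lemma fro_last_tendsto:
  assumes "filterlim (\<lambda>t. Max ((\<lambda>k. fro_norm (d k) (d (k - 1)) (W t k)) ` {1..L})) at_top at_top"
  shows "filterlim fro_last at_top at_top"
proof -
  define M where "M t = Max ((\<lambda>k. fro_norm (d k) (d (k - 1)) (W t k)) ` {1..L})" for t
  define A where "A = (\<Sum>k\<in>{1..L}. \<bar>fro_offset k\<bar>)"
  have "M t - A \<le> fro_last t" if t: "0 \<le> t" and M: "1 \<le> M t" for t
  proof -
    obtain k where k: "k \<in> {1..L}" and Mk: "M t = fro_norm (d k) (d (k - 1)) (W t k)"
      using Max_in[of "(\<lambda>k. fro_norm (d k) (d (k - 1)) (W t k)) ` {1..L}"] L_pos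
      unfolding M_def by fastforce
    have "(M t)\<^sup>2 = fro_last t + fro_offset k"
      using fro_sqnorm_eq_offset[OF t] k unfolding Mk fro_norm_power2 by simp
    moreover have "\<bar>fro_offset k\<bar> \<le> A" unfolding A_def using k by (intro member_le_sum) auto
    moreover have "M t \<le> (M t)\<^sup>2" using M by (simp add: power2_eq_square)
    ultimately show ?thesis by linarith
  qed
  moreover have "eventually (\<lambda>t. 1 \<le> M t \<and> 0 \<le> t) at_top"
    using assms unfolding M_def filterlim_at_top by (auto intro: eventually_conj eventually_ge_at_top)
  ultimately have "eventually (\<lambda>t. M t - A \<le> fro_last t) at_top"
    by (auto elim: eventually_mono)
  moreover have "filterlim (\<lambda>t. M t - A) at_top at_top"
    using filterlim_tendsto_add_at_top[OF tendsto_const assms, of "- A"] unfolding M_def by simp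
  ultimately show ?thesis by (rule filterlim_at_top_mono[rotated])
qed

lemma wprod_alignment_ge:
  assumes t: "0 \<le> t" and large: "gap_tail 1 + (\<Sum>k\<in>{1..L}. \<bar>fro_offset k\<bar>) + 1 \<le> fro_last t"
    and sv: "top_sv_pair (d 1) (d 0) (W t 1) u1 v1"
  shows "(\<Prod>k\<in>{1..L}. (fro_last t - gap_tail k) / (fro_last t + fro_offset k))
           - D / (fro_last t + fro_offset 1)
         \<le> \<bar>vinner (d 0) (\<lambda>j. wprod d L (W t) j / fro_prod t) v1\<bar>"
    (is "?G \<le> ?R")
proof -
  have pos: "0 < fro_last t + fro_offset k" if "k \<in> {1..L}" for k
  proof -
    have "\<bar>fro_offset k\<bar> \<le> (\<Sum>k\<in>{1..L}. \<bar>fro_offset k\<bar>)" using that by (intro member_le_sum) auto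
    then show ?thesis using large gap_tail_nonneg[of 1] by linarith
  qed
  have "0 \<le> (\<Sum>k\<in>{1..L}. \<bar>fro_offset k\<bar>)" by (simp add: sum_nonneg)
  then have tail: "gap_tail 1 \<le> fro_last t" using large by linarith
  have R1: "?R \<le> 1"
    using wprod_alignment_le_1[OF t] sv unfolding top_sv_pair_def by blast
  have "?G \<le> ?R\<^sup>2"
    using wprod_alignment_power2_ge[OF t tail pos sv] by simp
  also have "\<dots> \<le> ?R"
    using mult_left_le[OF R1 abs_ge_zero] by (simp only: power2_eq_square)
  finally show ?thesis .
qed

lemma wprod_alignment_tendsto:
  assumes lim: "filterlim (\<lambda>t. Max ((\<lambda>k. fro_norm (d k) (d (k - 1)) (W t k)) ` {1..L})) at_top at_top"
    and sv: "\<And>t. 0 \<le> t \<Longrightarrow> top_sv_pair (d 1) (d 0) (W t 1) (u1 t) (v1 t)"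
  shows "((\<lambda>t. \<bar>vinner (d 0) (\<lambda>j. wprod d L (W t) j / fro_prod t) (v1 t)\<bar>) \<longlongrightarrow> 1) at_top"
proof -
  let ?R = "\<lambda>t. \<bar>vinner (d 0) (\<lambda>j. wprod d L (W t) j / fro_prod t) (v1 t)\<bar>"
  define G where
    "G x = (\<Prod>k\<in>{1..L}. (x - gap_tail k) / (x + fro_offset k)) - D / (x + fro_offset 1)" for x
  have F: "filterlim fro_last at_top at_top" by (rule fro_last_tendsto[OF lim])
  have "((\<lambda>x::real. (x - a) / (x + b)) \<longlongrightarrow> 1) at_top" for a b
    by real_asymp
  then have "((\<lambda>x. \<Prod>k\<in>{1..L}. (x - gap_tail k) / (x + fro_offset k)) \<longlongrightarrow> 1) at_top"
    using tendsto_prod[of "{1..L}"] by fastforce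
  moreover have "((\<lambda>x::real. a / (x + b)) \<longlongrightarrow> 0) at_top" for a b
    by real_asymp
  ultimately have "(G \<longlongrightarrow> 1 - 0) at_top" unfolding G_def by (rule tendsto_diff)
  then have lower: "((\<lambda>t. G (fro_last t)) \<longlongrightarrow> 1) at_top"
    using filterlim_compose F by fastforce
  have "eventually (\<lambda>t. 0 \<le> t \<and> gap_tail 1 + (\<Sum>k\<in>{1..L}. \<bar>fro_offset k\<bar>) + 1 \<le> fro_last t) at_top"
    using F unfolding filterlim_at_top by (auto intro: eventually_conj eventually_ge_at_top)
  then have "eventually (\<lambda>t. G (fro_last t) \<le> ?R t \<and> ?R t \<le> 1) at_top"
  proof eventually_elim
    case (elim t)
    then have t: "0 \<le> t" by simp
    show ?case
      using wprod_alignment_ge[OF t _ sv[OF t]] wprod_alignment_le_1[OF t] sv[OF t] elim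
      unfolding G_def top_sv_pair_def by blast
  qed
  then show ?thesis
    by (intro tendsto_sandwich[OF _ _ lower tendsto_const]) (auto elim: eventually_mono)
qed

end

theorem mainTheorem3:
  fixes L n :: nat and d :: "nat \<Rightarrow> nat"
    and x :: "nat \<Rightarrow> vec" and y :: "nat \<Rightarrow> real" and z :: "nat \<Rightarrow> vec"
    and loss dloss :: "real \<Rightarrow> real" and W :: "real \<Rightarrow> net"
  assumes L2: "L \<ge> 2"
    and dpos: "\<forall>k\<le>L. d k \<ge> 1" and dL: "d L = 1"
    and npos: "n \<ge> 1"
    and data: "\<forall>i<n. vnorm (d 0) (x i) \<le> 1 \<and> (y i = 1 \<or> y i = -1) \<and> (\<forall>j. z i j = y i * x i j)"
    and ell_deriv: "\<forall>s. (loss has_real_derivative dloss s) (at s)"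
    and ell_C1: "continuous_on UNIV dloss"
    and gf: "gradient_flow loss n z d L W"
  shows
    "(\<forall>t\<ge>0. \<forall>k\<in>{1..L}.
        (fro_norm (d k) (d (k - 1)) (W t k))\<^sup>2 - (spec_norm (d k) (d (k - 1)) (W t k))\<^sup>2
          \<le> Dconst d L (W 0))
   \<and> (\<forall>t\<ge>0. \<forall>k. 1 \<le> k \<and> k < L \<longrightarrow>
        mat_nonzero (d (Suc k)) (d k) (W t (Suc k)) \<longrightarrow>
        (\<forall>uk vk uk1 vk1.
           top_sv_pair (d k) (d (k - 1)) (W t k) uk vk \<longrightarrow>
           top_sv_pair (d (Suc k)) (d k) (W t (Suc k)) uk1 vk1 \<longrightarrow>
           (vinner (d k) vk1 uk)\<^sup>2 \<ge>
             1 - (Dconst d L (W 0) + (spec_norm (d (Suc k)) (d k) (W 0 (Suc k)))\<^sup>2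
                    + (spec_norm (d k) (d (k - 1)) (W 0 k))\<^sup>2)
                  / (spec_norm (d (Suc k)) (d k) (W t (Suc k)))\<^sup>2))
   \<and> (filterlim (\<lambda>t. Max ((\<lambda>k. fro_norm (d k) (d (k - 1)) (W t k)) ` {1..L})) at_top at_top \<longrightarrow>
        (\<forall>u1 v1 :: real \<Rightarrow> vec.
           (\<forall>t\<ge>0. top_sv_pair (d 1) (d 0) (W t 1) (u1 t) (v1 t)) \<longrightarrow>
           ((\<lambda>t. \<bar>vinner (d 0)
                     (\<lambda>j. wprod d L (W t) j / (\<Prod>k\<in>{1..L}. fro_norm (d k) (d (k - 1)) (W t k)))
                     (v1 t)\<bar>) \<longlongrightarrow> 1) at_top))"
proof -
  interpret linear_net_gradient_flow L n d z loss dloss W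
    using L2 dL ell_deriv gf by unfold_locales auto
  show ?thesis
    by (intro conjI allI impI ballI)
      (use fro_minus_spec_le_D in simp, use singular_vectors_aligned in blast,
       use wprod_alignment_tendsto[unfolded fro_prod_def] in blast)
qed

end
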